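(* Let $h:\mathbb{R}\to\mathbb{R}$ be a smooth function that is flat at $0$ (all derivatives vanish at $0$, and $h(0)=0$) and positive everywhere else, such that the vector field $\xi=h\,\partial/\partial x$ is complete (e.g. $h(x)=e^{-1/x^2}$ for $x\neq0$, $h(0)=0$). Let $\psi:\mathbb{R}\to\mathbb{R}$ be the time-one flow of $\xi$, and let $\hat\psi(x)=\psi(x)$ for $x\ge0$ and $\hat\psi(x)=\psi^{-1}(x)$ for $x<0$. Let $G$ be a copy of $\mathbb{Z}$ acting on $\mathbb{R}$ with generator acting by $\psi$, and $H$ a copy of $\mathbb{Z}$ acting on $\mathbb{R}$ with generator acting by $\hat\psi$; these actions have the same orbits, so $\mathbb{R}/G=\mathbb{R}/H$. Then the identity map of this orbit space does not lift to an invertible (biprincipal) bibundle between the action groupoids $G\ltimes\mathbb{R}$ and $H\ltimes\mathbb{R}$; moreover, these action groupoids are not Morita equivalent.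
   Context: For a group $K$ acting on a manifold $M$, the action groupoid $K\ltimes M$ has arrows $K\times M$, base $M$, $s(k,x)=x$, $t(k,x)=kx$. A bibundle $P:G\to H$ between Lie groupoids is a manifold with a left $G$-action along $a:P\to G_0$ and commuting right $H$-action along $a':P\to H_0$ such that $a'$ is $G$-invariant and $a$ is a principal $H$-bundle (an $H$-invariant surjective submersion with $(p,h)\mapsto(p,ph)$ a diffeomorphism $P\times_{a',t}H\to P\times_{G_0}P$). It is invertible (biprincipal) if $a'$ is also a principal $G$-bundle; it lifts a map $f:|G|\to|H|$ of orbit spaces if $f([a(p)])=[a'(p)]$ for all $p$. Two Lie groupoids are Morita equivalent if there is an invertible bibundle between them. *)

theory Defs
  imports "HOL-Analysis.Analysis"
begin

definition dirderiv :: "('a::real_normed_vector \<Rightarrow> 'b::real_normed_vector) \<Rightarrow> 'a \<Rightarrow> 'a \<Rightarrow> 'b" where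
  "dirderiv f v x = vector_derivative (\<lambda>t::real. f (x + t *\<^sub>R v)) (at 0)"

fun iter_dd :: "'a::real_normed_vector list \<Rightarrow> ('a \<Rightarrow> 'b::real_normed_vector) \<Rightarrow> 'a \<Rightarrow> 'b" where
  "iter_dd [] f = f"
| "iter_dd (v # vs) f = dirderiv (iter_dd vs f) v"

definition smooth_on :: "'a::euclidean_space set \<Rightarrow> ('a \<Rightarrow> 'b::euclidean_space) \<Rightarrow> bool" where
  "smooth_on S f \<longleftrightarrow>
     (\<forall>vs. continuous_on S (iter_dd vs f) \<and>
           (\<forall>v. \<forall>x\<in>S. (\<lambda>t::real. iter_dd vs f (x + t *\<^sub>R v)) differentiable (at 0)))"

definition atlas_open :: "'p set \<Rightarrow> ('p set \<times> ('p \<Rightarrow> 'e::euclidean_space)) set \<Rightarrow> 'p set \<Rightarrow> bool" where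
  "atlas_open M A W \<longleftrightarrow> W \<subseteq> M \<and> (\<forall>(U,\<phi>)\<in>A. open (\<phi> ` (U \<inter> W)))"

definition manifold :: "'p set \<Rightarrow> ('p set \<times> ('p \<Rightarrow> 'e::euclidean_space)) set \<Rightarrow> bool" where
  "manifold M A \<longleftrightarrow>
     (\<forall>(U,\<phi>)\<in>A. U \<subseteq> M \<and> inj_on \<phi> U \<and> open (\<phi> ` U)) \<and>
     M = \<Union>(fst ` A) \<and>
     (\<forall>(U,\<phi>)\<in>A. \<forall>(V,\<theta>)\<in>A. open (\<phi> ` (U \<inter> V)) \<and>
                         smooth_on (\<phi> ` (U \<inter> V)) (\<theta> \<circ> inv_into U \<phi>)) \<and>
     (\<forall>x\<in>M. \<forall>y\<in>M. x \<noteq> y \<longrightarrow>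
        (\<exists>W1 W2. atlas_open M A W1 \<and> atlas_open M A W2 \<and> x \<in> W1 \<and> y \<in> W2 \<and> W1 \<inter> W2 = {})) \<and>
     (\<exists>A'\<subseteq>A. countable A' \<and> M = \<Union>(fst ` A'))"

definition smooth_map ::
  "'p set \<Rightarrow> ('p set \<times> ('p \<Rightarrow> 'e::euclidean_space)) set \<Rightarrow>
   'q set \<Rightarrow> ('q set \<times> ('q \<Rightarrow> 'f::euclidean_space)) set \<Rightarrow> ('p \<Rightarrow> 'q) \<Rightarrow> bool" where
  "smooth_map M A N B f \<longleftrightarrow>
     (\<forall>x\<in>M. f x \<in> N) \<and>
     (\<forall>(U,\<phi>)\<in>A. \<forall>(V,\<theta>)\<in>B. open (\<phi> ` (U \<inter> f -` V)) \<and>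
        smooth_on (\<phi> ` (U \<inter> f -` V)) (\<theta> \<circ> f \<circ> inv_into U \<phi>))"

definition submersion ::
  "'p set \<Rightarrow> ('p set \<times> ('p \<Rightarrow> 'e::euclidean_space)) set \<Rightarrow>
   'q set \<Rightarrow> ('q set \<times> ('q \<Rightarrow> 'f::euclidean_space)) set \<Rightarrow> ('p \<Rightarrow> 'q) \<Rightarrow> bool" where
  "submersion M A N B f \<longleftrightarrow> smooth_map M A N B f \<and>
     (\<forall>(U,\<phi>)\<in>A. \<forall>(V,\<theta>)\<in>B. \<forall>x\<in>U \<inter> f -` V.
        \<exists>D. ((\<theta> \<circ> f \<circ> inv_into U \<phi>) has_derivative D) (at (\<phi> x)) \<and> surj D)"

definition prod_atlas ::
  "('p set \<times> ('p \<Rightarrow> 'e::euclidean_space)) set \<Rightarrow> ('q set \<times> ('q \<Rightarrow> 'f::euclidean_space)) set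
   \<Rightarrow> (('p \<times> 'q) set \<times> ('p \<times> 'q \<Rightarrow> 'e \<times> 'f)) set" where
  "prod_atlas A B = {(U \<times> V, \<lambda>(x,y). (\<phi> x, \<theta> y)) | U \<phi> V \<theta>. (U,\<phi>) \<in> A \<and> (V,\<theta>) \<in> B}"

definition restrict_atlas :: "('p set \<times> ('p \<Rightarrow> 'e)) set \<Rightarrow> 'p set \<Rightarrow> ('p set \<times> ('p \<Rightarrow> 'e)) set" where
  "restrict_atlas A W = {(U \<inter> W, \<phi>) | U \<phi>. (U,\<phi>) \<in> A}"

text \<open>Smoothness of a map defined on a subset S of a manifold (used for maps on embedded
  submanifolds such as fibred products): locally the restriction of a smooth map on an open set.\<close>
definition smooth_on_subset ::
  "'p set \<Rightarrow> ('p set \<times> ('p \<Rightarrow> 'e::euclidean_space)) set \<Rightarrow> 'p set \<Rightarrow>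
   'q set \<Rightarrow> ('q set \<times> ('q \<Rightarrow> 'f::euclidean_space)) set \<Rightarrow> ('p \<Rightarrow> 'q) \<Rightarrow> bool" where
  "smooth_on_subset M A S N B f \<longleftrightarrow> S \<subseteq> M \<and>
     (\<forall>x\<in>S. \<exists>W F. atlas_open M A W \<and> x \<in> W \<and> smooth_map W (restrict_atlas A W) N B F \<and>
                  (\<forall>y\<in>S \<inter> W. F y = f y))"

definition diffeo_subsets ::
  "'p set \<Rightarrow> ('p set \<times> ('p \<Rightarrow> 'e::euclidean_space)) set \<Rightarrow> 'p set \<Rightarrow>
   'q set \<Rightarrow> ('q set \<times> ('q \<Rightarrow> 'f::euclidean_space)) set \<Rightarrow> 'q set \<Rightarrow> ('p \<Rightarrow> 'q) \<Rightarrow> bool" where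
  "diffeo_subsets M A S N B T f \<longleftrightarrow> bij_betw f S T \<and>
     smooth_on_subset M A S N B f \<and> smooth_on_subset N B T M A (inv_into S f)"

record ('g, 'o, 'eg, 'eo) groupoid_data =
  arr :: "'g set"
  obj :: "'o set"
  arr_atlas :: "('g set \<times> ('g \<Rightarrow> 'eg)) set"
  obj_atlas :: "('o set \<times> ('o \<Rightarrow> 'eo)) set"
  src :: "'g \<Rightarrow> 'o"
  tgt :: "'g \<Rightarrow> 'o"
  comp :: "'g \<Rightarrow> 'g \<Rightarrow> 'g"  \<comment> \<open>comp g1 g2 = g1 after g2, defined when src g1 = tgt g2\<close>
  ident :: "'o \<Rightarrow> 'g"

definition zpow :: "(real \<Rightarrow> real) \<Rightarrow> int \<Rightarrow> real \<Rightarrow> real" where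
  "zpow f k = (if k \<ge> 0 then f ^^ nat k else inv f ^^ nat (- k))"

definition Z_action_groupoid :: "(real \<Rightarrow> real) \<Rightarrow> (int \<times> real, real, real, real) groupoid_data" where
  "Z_action_groupoid f =
     \<lparr> arr = UNIV, obj = UNIV,
       arr_atlas = {({n} \<times> UNIV, snd) | n. True},
       obj_atlas = {(UNIV, id)},
       src = snd,
       tgt = (\<lambda>(k,x). zpow f k x),
       comp = (\<lambda>(k,y) (l,x). (k + l, x)),
       ident = (\<lambda>x. (0, x)) \<rparr>"

definition left_dom where
  "left_dom G P a = {(g,p). g \<in> arr G \<and> p \<in> P \<and> src G g = a p}"

definition right_dom where
  "right_dom H P a' = {(p,h). p \<in> P \<and> h \<in> arr H \<and> a' p = tgt H h}"

definition fibre_sq where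
  "fibre_sq P a = {(p,q). p \<in> P \<and> q \<in> P \<and> a p = a q}"

definition bibundle ::
  "('g, 'o, 'eg::euclidean_space, 'eo::euclidean_space) groupoid_data \<Rightarrow>
   ('h, 'q, 'eh::euclidean_space, 'eq::euclidean_space) groupoid_data \<Rightarrow>
   'p set \<Rightarrow> ('p set \<times> ('p \<Rightarrow> 'ep::euclidean_space)) set \<Rightarrow>
   ('p \<Rightarrow> 'o) \<Rightarrow> ('p \<Rightarrow> 'q) \<Rightarrow> ('g \<Rightarrow> 'p \<Rightarrow> 'p) \<Rightarrow> ('p \<Rightarrow> 'h \<Rightarrow> 'p) \<Rightarrow> bool" where
  "bibundle G H P AP a a' la ra \<longleftrightarrow>
     manifold P AP \<and>
     smooth_map P AP (obj G) (obj_atlas G) a \<and>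
     smooth_map P AP (obj H) (obj_atlas H) a' \<and>
     \<comment> \<open>left G-action along a\<close>
     smooth_on_subset (arr G \<times> P) (prod_atlas (arr_atlas G) AP) (left_dom G P a) P AP (case_prod la) \<and>
     (\<forall>(g,p)\<in>left_dom G P a. la g p \<in> P \<and> a (la g p) = tgt G g) \<and>
     (\<forall>p\<in>P. la (ident G (a p)) p = p) \<and>
     (\<forall>g1\<in>arr G. \<forall>g2\<in>arr G. \<forall>p\<in>P. src G g1 = tgt G g2 \<longrightarrow> src G g2 = a p \<longrightarrow>
        la (comp G g1 g2) p = la g1 (la g2 p)) \<and>
     \<comment> \<open>right H-action along a'\<close>
     smooth_on_subset (P \<times> arr H) (prod_atlas AP (arr_atlas H)) (right_dom H P a') P AP (case_prod ra) \<and>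
     (\<forall>(p,h)\<in>right_dom H P a'. ra p h \<in> P \<and> a' (ra p h) = src H h) \<and>
     (\<forall>p\<in>P. ra p (ident H (a' p)) = p) \<and>
     (\<forall>h1\<in>arr H. \<forall>h2\<in>arr H. \<forall>p\<in>P. src H h1 = tgt H h2 \<longrightarrow> a' p = tgt H h1 \<longrightarrow>
        ra p (comp H h1 h2) = ra (ra p h1) h2) \<and>
     \<comment> \<open>the actions commute\<close>
     (\<forall>(g,p)\<in>left_dom G P a. \<forall>h\<in>arr H. a' p = tgt H h \<longrightarrow> la g (ra p h) = ra (la g p) h) \<and>
     \<comment> \<open>a' is G-invariant\<close>
     (\<forall>(g,p)\<in>left_dom G P a. a' (la g p) = a' p) \<and>
     \<comment> \<open>a is a principal H-bundle\<close>
     (\<forall>(p,h)\<in>right_dom H P a'. a (ra p h) = a p) \<and>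
     a ` P = obj G \<and>
     submersion P AP (obj G) (obj_atlas G) a \<and>
     diffeo_subsets (P \<times> arr H) (prod_atlas AP (arr_atlas H)) (right_dom H P a')
                    (P \<times> P) (prod_atlas AP AP) (fibre_sq P a) (\<lambda>(p,h). (p, ra p h))"

text \<open>Invertible (biprincipal) bibundle: additionally a' is a principal G-bundle.\<close>
definition biprincipal_bibundle where
  "biprincipal_bibundle G H P AP a a' la ra \<longleftrightarrow>
     bibundle G H P AP a a' la ra \<and>
     a' ` P = obj H \<and>
     submersion P AP (obj H) (obj_atlas H) a' \<and>
     diffeo_subsets (arr G \<times> P) (prod_atlas (arr_atlas G) AP) (left_dom G P a)
                    (P \<times> P) (prod_atlas AP AP) (fibre_sq P a') (\<lambda>(g,p). (la g p, p))"

definition orbit where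
  "orbit G x = {tgt G g | g. g \<in> arr G \<and> src G g = x}"

definition lifts_identity where
  "lifts_identity G H P a a' \<longleftrightarrow> (\<forall>p\<in>P. orbit G (a p) = orbit H (a' p))"

end

theory Submission
  imports Defs
begin

text \<open>Suppose P were a biprincipal bibundle. Pick p over 0 and let \<sigma> q = 1 \<cdot> q be the action of
  the generator of G. As \<psi> fixes 0, \<sigma> p lies in the a-fibre of p, so \<sigma> p = p \<cdot> (m, y) for an
  arrow of H, and m \<noteq> 0 because G acts freely. The arrow spaces are disjoint unions of copies of
  \<real> indexed by \<int> and the inverses of the principal-bundle maps are continuous, so the integer
  part of the arrow relating two nearby points is locally constant. Hence both anchors are locally
  injective, and along a curve through p they turn \<sigma> into \<psi> on a-values and into \<psi>h^m on
  a'-values: the two maps are locally conjugate by a homeomorphism fixing 0. But \<psi> moves every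
  point near 0 upwards, whereas \<psi>h^m moves the two sides of 0 in opposite directions (away from 0
  for m > 0, towards it for m < 0), and a monotone homeomorphism cannot turn the first kind of map
  into the second.\<close>

section \<open>Uniqueness for scalar autonomous ODEs\<close>

lemma lipschitz_on_cball_if_continuous_deriv:
  fixes f f' :: "real \<Rightarrow> real"
  assumes deriv: "\<And>x. (f has_real_derivative f' x) (at x)" and cont: "continuous_on UNIV f'"
  shows "\<exists>L. L-lipschitz_on (cball 0 R) f"
proof -
  have image_compact: "compact (f' ` cball 0 R)"
    using continuous_on_subset[OF cont subset_UNIV] by (rule compact_continuous_image) simp
  obtain B where "B > 0" and "\<forall>y \<in> f' ` cball 0 R. norm y \<le> B"
    using compact_imp_bounded[OF image_compact] unfolding bounded_pos by blast
  then have B: "\<And>x. x \<in> cball 0 R \<Longrightarrow> norm (f' x) \<le> B"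
    by blast
  have "B-lipschitz_on (cball 0 R) f"
  proof (rule lipschitz_onI)
    fix x y :: real assume "x \<in> cball 0 R" "y \<in> cball 0 R"
    then have "norm (f x - f y) \<le> B * norm (x - y)"
      using B by (intro field_differentiable_bound[of "cball 0 R"])
        (auto intro: has_field_derivative_at_within deriv)
    then show "dist (f x) (f y) \<le> B * dist x y"
      by (simp add: dist_norm)
  qed (use \<open>B > 0\<close> in simp)
  then show ?thesis ..
qed

lemma nonneg_zero_if_deriv_le_linear:
  fixes w w' :: "real \<Rightarrow> real"
  assumes "a \<le> b"
    and deriv: "\<And>s. s \<in> {a..b} \<Longrightarrow> (w has_real_derivative w' s) (at s)"
    and bound: "\<And>s. s \<in> {a..b} \<Longrightarrow> w' s \<le> L * w s"
    and nonneg: "\<And>s. 0 \<le> w s" and start: "w a = 0"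
  shows "w b = 0"
proof -
  define g where "g s = exp (- L * s) * w s" for s
  have "g b \<le> g a"
  proof (rule DERIV_nonpos_imp_nonincreasing[OF \<open>a \<le> b\<close>])
    fix s assume s: "a \<le> s" "s \<le> b"
    have "(g has_real_derivative exp (- L * s) * (- L) * w s + exp (- L * s) * w' s) (at s)"
      unfolding g_def using s by (auto intro!: derivative_eq_intros deriv)
    moreover have "exp (- L * s) * (- L) * w s + exp (- L * s) * w' s \<le> 0"
    proof -
      have "exp (- L * s) * (w' s - L * w s) \<le> 0"
        using bound s by (simp add: mult_nonneg_nonpos)
      then show ?thesis by (simp add: algebra_simps)
    qed
    ultimately show "\<exists>y. (g has_real_derivative y) (at s) \<and> y \<le> 0" by blast
  qed
  then have "w b \<le> 0"
    using start by (simp add: g_def mult_le_0_iff)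
  with nonneg show ?thesis by (simp add: order_antisym)
qed

lemma ode_solutions_unique_forward:
  fixes f z1 z2 :: "real \<Rightarrow> real"
  assumes lip: "\<And>R. \<exists>L. L-lipschitz_on (cball 0 R) f"
    and z1: "\<And>t. (z1 has_real_derivative f (z1 t)) (at t)"
    and z2: "\<And>t. (z2 has_real_derivative f (z2 t)) (at t)"
    and start: "z1 t0 = z2 t0" and "t0 \<le> t"
  shows "z1 t = z2 t"
proof -
  have "continuous_on {t0..t} z1" "continuous_on {t0..t} z2"
    using z1 z2 by (auto intro!: continuous_at_imp_continuous_on DERIV_isCont)
  then have "bounded (z1 ` {t0..t} \<union> z2 ` {t0..t})"
    by (intro compact_imp_bounded compact_Un compact_continuous_image) auto
  then obtain R where "\<And>x. x \<in> z1 ` {t0..t} \<union> z2 ` {t0..t} \<Longrightarrow> \<bar>x\<bar> \<le> R"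
    unfolding bounded_real by blast
  then have R: "\<And>s. s \<in> {t0..t} \<Longrightarrow> z1 s \<in> cball 0 R \<and> z2 s \<in> cball 0 R"
    by auto
  obtain L where L: "L-lipschitz_on (cball 0 R) f"
    using lip by blast
  define w where "w s = (z1 s - z2 s)\<^sup>2" for s
  define w' where "w' s = 2 * (z1 s - z2 s) * (f (z1 s) - f (z2 s))" for s
  have "w t = 0"
  proof (rule nonneg_zero_if_deriv_le_linear[OF \<open>t0 \<le> t\<close>, of w w' "2 * L"])
    fix s assume s: "s \<in> {t0..t}"
    show "(w has_real_derivative w' s) (at s)"
      unfolding w_def w'_def by (auto intro!: derivative_eq_intros z1 z2)
    have lip_bound: "\<bar>f (z1 s) - f (z2 s)\<bar> \<le> L * \<bar>z1 s - z2 s\<bar>"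
      using lipschitz_onD[OF L] R[OF s] by (simp add: dist_real_def)
    have "w' s \<le> 2 * \<bar>z1 s - z2 s\<bar> * \<bar>f (z1 s) - f (z2 s)\<bar>"
      unfolding w'_def by (metis abs_ge_self abs_mult abs_numeral)
    also have "\<dots> \<le> 2 * \<bar>z1 s - z2 s\<bar> * (L * \<bar>z1 s - z2 s\<bar>)"
      using lip_bound by (intro mult_left_mono) auto
    also have "\<dots> = 2 * L * w s"
      by (simp add: w_def power2_eq_square)
    finally show "w' s \<le> 2 * L * w s" .
  qed (simp_all add: w_def start)
  then show ?thesis by (simp add: w_def)
qed

lemma ode_solutions_unique:
  fixes f z1 z2 :: "real \<Rightarrow> real"
  assumes lip: "\<And>R. \<exists>L. L-lipschitz_on (cball 0 R) f"
    and z1: "\<And>t. (z1 has_real_derivative f (z1 t)) (at t)"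
    and z2: "\<And>t. (z2 has_real_derivative f (z2 t)) (at t)"
    and start: "z1 t0 = z2 t0"
  shows "z1 t = z2 t"
proof (cases "t0 \<le> t")
  case True
  then show ?thesis by (rule ode_solutions_unique_forward[OF lip z1 z2 start])
next
  case False
  \<comment> \<open>Backwards in time, s \<mapsto> z (- s) solves the equation for - f.\<close>
  have "z1 (- (- t)) = z2 (- (- t))"
  proof (rule ode_solutions_unique_forward[of "\<lambda>x. - f x" "\<lambda>s. z1 (- s)" "\<lambda>s. z2 (- s)" "- t0"])
    show "\<exists>L. L-lipschitz_on (cball 0 R) (\<lambda>x. - f x)" for R
      using lip by simp
    show "((\<lambda>s. z1 (- s)) has_real_derivative - f (z1 (- s))) (at s)"
      "((\<lambda>s. z2 (- s)) has_real_derivative - f (z2 (- s))) (at s)" for s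
      using z1 z2 DERIV_mirror by blast+
  qed (use start False in auto)
  then show ?thesis by simp
qed

section \<open>Maps moving points away from or towards 0\<close>

definition moves_away_from_zero :: "(real \<Rightarrow> real) \<Rightarrow> bool" where
  "moves_away_from_zero f \<longleftrightarrow> (\<forall>y>0. y < f y) \<and> (\<forall>y<0. f y < y)"

definition moves_towards_zero :: "(real \<Rightarrow> real) \<Rightarrow> bool" where
  "moves_towards_zero f \<longleftrightarrow> (\<forall>y>0. f y < y) \<and> (\<forall>y<0. y < f y)"

lemma funpow_rel_if_invariant:
  assumes "transp R" and step: "\<And>y. Q y \<Longrightarrow> Q (f y) \<and> R y (f y)" and "Q y" "0 < n"
  shows "R y ((f ^^ n) y)"
proof -
  have "Q ((f ^^ k) y) \<and> (0 < k \<longrightarrow> R y ((f ^^ k) y))" for k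
  proof (induction k)
    case (Suc k)
    define z where "z = (f ^^ k) y"
    have "Q (f z)" "R z (f z)"
      using step Suc.IH unfolding z_def by blast+
    moreover have "R y (f z)"
    proof (cases "k = 0")
      case True
      with \<open>R z (f z)\<close> show ?thesis by (simp add: z_def)
    next
      case False
      with Suc.IH \<open>R z (f z)\<close> \<open>transp R\<close> show ?thesis
        unfolding z_def by (blast dest: transpD)
    qed
    ultimately show ?case by (simp add: z_def)
  qed (simp add: \<open>Q y\<close>)
  then show ?thesis
    using \<open>0 < n\<close> by blast
qed

lemma transp_less_real: "transp ((<) :: real \<Rightarrow> real \<Rightarrow> bool)" "transp ((>) :: real \<Rightarrow> real \<Rightarrow> bool)"
  by (auto intro: transpI)

lemma funpow_moves_away_from_zero:
  assumes up: "\<And>y. 0 < y \<Longrightarrow> y < f y" and down: "\<And>y. y < 0 \<Longrightarrow> f y < y" and "0 < n"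
  shows "moves_away_from_zero (f ^^ n)"
  unfolding moves_away_from_zero_def
proof (intro conjI allI impI)
  fix y :: real
  show "y < (f ^^ n) y" if "0 < y"
  proof (rule funpow_rel_if_invariant[of "(<)" "\<lambda>y. 0 < y"])
    show "0 < f x \<and> x < f x" if "0 < x" for x
      using up[OF that] that by linarith
  qed (use transp_less_real that \<open>0 < n\<close> in auto)
  show "(f ^^ n) y < y" if "y < 0"
  proof (rule funpow_rel_if_invariant[of "(>)" "\<lambda>y. y < 0"])
    show "f x < 0 \<and> f x < x" if "x < 0" for x
      using down[OF that] that by linarith
  qed (use transp_less_real that \<open>0 < n\<close> in auto)
qed

lemma funpow_moves_towards_zero:
  assumes "\<And>y. 0 < y \<Longrightarrow> 0 < f y \<and> f y < y" and "\<And>y. y < 0 \<Longrightarrow> f y < 0 \<and> y < f y"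
    and "0 < n"
  shows "moves_towards_zero (f ^^ n)"
  unfolding moves_towards_zero_def
proof (intro conjI allI impI)
  fix y :: real
  show "(f ^^ n) y < y" if "0 < y"
    by (rule funpow_rel_if_invariant[of "(>)" "\<lambda>y. 0 < y"]) (use assms transp_less_real that in auto)
  show "y < (f ^^ n) y" if "y < 0"
    by (rule funpow_rel_if_invariant[of "(<)" "\<lambda>y. y < 0"]) (use assms transp_less_real that in auto)
qed

lemma inv_symmetrized:
  fixes f g :: "real \<Rightarrow> real"
  assumes inverse: "\<And>x. f (g x) = x" "\<And>x. g (f x) = x" and sign: "\<And>x. 0 \<le> f x \<longleftrightarrow> 0 \<le> x"
  shows "inv (\<lambda>x. if 0 \<le> x then f x else g x) = (\<lambda>x. if 0 \<le> x then g x else f x)"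
proof (rule inv_equality)
  have sign_g: "0 \<le> g x \<longleftrightarrow> 0 \<le> x" for x
    using sign[of "g x"] inverse(1)[of x] by simp
  show "(if 0 \<le> (if 0 \<le> x then f x else g x) then g (if 0 \<le> x then f x else g x)
      else f (if 0 \<le> x then f x else g x)) = x" for x
    using sign[of x] sign_g[of x] inverse by simp
  show "(if 0 \<le> (if 0 \<le> y then g y else f y) then f (if 0 \<le> y then g y else f y)
      else g (if 0 \<le> y then g y else f y)) = y" for y
    using sign[of y] sign_g[of y] inverse by simp
qed

lemma zpow_symmetrized_moves:
  fixes f g :: "real \<Rightarrow> real"
  assumes inverse: "\<And>x. f (g x) = x" "\<And>x. g (f x) = x"
    and fix0: "f 0 = 0" and neg: "\<And>x. x < 0 \<Longrightarrow> f x < 0" and up: "\<And>x. x \<noteq> 0 \<Longrightarrow> x < f x"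
    and "m \<noteq> 0"
  defines "f\<^sub>s \<equiv> \<lambda>x. if 0 \<le> x then f x else inv f x"
  shows "moves_away_from_zero (zpow f\<^sub>s m) \<or> moves_towards_zero (zpow f\<^sub>s m)"
proof -
  have "inv f = g"
    using inverse by (intro inv_equality) auto
  then have f\<^sub>s: "f\<^sub>s = (\<lambda>x. if 0 \<le> x then f x else g x)"
    unfolding f\<^sub>s_def by (rule arg_cong)
  have sign: "0 \<le> f x \<longleftrightarrow> 0 \<le> x" for x
  proof (cases "x < 0")
    case True
    then show ?thesis
      using neg[of x] by simp
  next
    case False
    then show ?thesis
      using up[of x] fix0 by (cases "x = 0") auto
  qed
  have down: "g x < x" if "x \<noteq> 0" for x
    using up[of "g x"] inverse(1)[of x] fix0 that by (cases "g x = 0") auto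
  have g_pos: "0 < g x" if "0 < x" for x
    using sign[of "g x"] inverse(1)[of x] that by (cases "g x = 0") (auto simp: fix0)
  show ?thesis
  proof (cases "0 < m")
    case True
    then have "moves_away_from_zero (f\<^sub>s ^^ nat m)"
      using up down by (intro funpow_moves_away_from_zero) (auto simp: f\<^sub>s)
    with True show ?thesis
      unfolding zpow_def by (simp only: if_P less_imp_le simp_thms)
  next
    case False
    then have "moves_towards_zero (inv f\<^sub>s ^^ nat (- m))"
      using \<open>m \<noteq> 0\<close> g_pos neg up down
      by (intro funpow_moves_towards_zero) (auto simp: f\<^sub>s inv_symmetrized[OF inverse sign])
    moreover have "\<not> 0 \<le> m"
      using False \<open>m \<noteq> 0\<close> by linarith
    ultimately show ?thesis
      unfolding zpow_def by (simp only: if_not_P simp_thms if_False)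
  qed
qed

lemma moves_from_or_towards_zero_fixed_point:
  assumes "moves_away_from_zero S \<or> moves_towards_zero S" "S y = y"
  shows "y = 0"
proof (rule ccontr)
  assume "y \<noteq> 0"
  then have "y < 0 \<or> 0 < y"
    by linarith
  with assms show False
    by (auto simp: moves_away_from_zero_def moves_towards_zero_def)
qed

lemma moves_from_or_towards_zero_opposite_signs:
  assumes "moves_away_from_zero S \<or> moves_towards_zero S" and "y * z < 0"
  shows "(y < S y) \<noteq> (z < S z)"
  using assms by (auto simp: moves_away_from_zero_def moves_towards_zero_def mult_less_0_iff)

section \<open>The flow of a vector field vanishing only at 0\<close>

locale positive_field_flow =
  fixes h :: "real \<Rightarrow> real" and \<phi> :: "real \<Rightarrow> real \<Rightarrow> real"
  assumes lipschitz: "\<And>R. \<exists>L. L-lipschitz_on (cball 0 R) h"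
    and field_zero: "h 0 = 0"
    and field_pos: "\<And>x. x \<noteq> 0 \<Longrightarrow> 0 < h x"
    and flow_0: "\<And>x. \<phi> 0 x = x"
    and flow_deriv: "\<And>t x. ((\<lambda>s. \<phi> s x) has_real_derivative h (\<phi> t x)) (at t)"
begin

lemma flow_add: "\<phi> s (\<phi> t x) = \<phi> (s + t) x"
proof (rule ode_solutions_unique[OF lipschitz, of "\<lambda>s. \<phi> s (\<phi> t x)" "\<lambda>s. \<phi> (s + t) x" 0])
  show "((\<lambda>s. \<phi> (s + t) x) has_real_derivative h (\<phi> (s + t) x)) (at s)" for s
    using flow_deriv[where t="s + t" and x=x] by (simp add: DERIV_shift)
qed (simp_all add: flow_deriv flow_0)

lemma flow_fixes_zero: "\<phi> t 0 = 0"
  using ode_solutions_unique[OF lipschitz, of "\<lambda>s. \<phi> s 0" "\<lambda>s. 0" 0 t]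
  by (simp add: flow_deriv flow_0 field_zero)

lemma flow_nonzero:
  assumes "x \<noteq> 0"
  shows "\<phi> t x \<noteq> 0"
  using flow_add[of "- t" t x] flow_fixes_zero[of "- t"] assms by (auto simp: flow_0)

lemma continuous_on_flow: "continuous_on S (\<lambda>s. \<phi> s x)"
  using flow_deriv by (auto intro!: continuous_at_imp_continuous_on DERIV_isCont)

lemma flow_pos:
  assumes "0 < x"
  shows "0 < \<phi> t x"
proof (rule ccontr)
  assume "\<not> 0 < \<phi> t x"
  then have "\<exists>s. \<phi> s x = 0"
    using IVT2'[where f="\<lambda>s. \<phi> s x" and a=0 and b=t and y=0]
      IVT'[where f="\<lambda>s. \<phi> s x" and a=t and b=0 and y=0] assms continuous_on_flow
    by (cases "0 \<le> t") (auto simp: flow_0)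
  with flow_nonzero assms show False by force
qed

lemma flow_neg:
  assumes "x < 0"
  shows "\<phi> t x < 0"
proof (rule ccontr)
  assume "\<not> \<phi> t x < 0"
  then have "0 < \<phi> t x"
    using flow_nonzero[of x t] assms by linarith
  then have "0 < \<phi> (- t) (\<phi> t x)"
    by (rule flow_pos)
  with assms show False
    by (simp add: flow_add flow_0)
qed

lemma flow_strict_mono:
  assumes "x \<noteq> 0" "s < t"
  shows "\<phi> s x < \<phi> t x"
proof (rule DERIV_pos_imp_increasing[OF \<open>s < t\<close>])
  fix r
  have "0 < h (\<phi> r x)"
    using field_pos flow_nonzero assms(1) by blast
  then show "\<exists>y. ((\<lambda>s. \<phi> s x) has_real_derivative y) (at r) \<and> 0 < y"
    using flow_deriv by blast
qed

lemma flow_one_up: "x \<noteq> 0 \<Longrightarrow> x < \<phi> 1 x"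
  using flow_strict_mono[of x 0 1] by (simp add: flow_0)

lemma zpow_symmetrized_flow_moves:
  assumes "m \<noteq> 0"
  shows "moves_away_from_zero (zpow (\<lambda>x. if 0 \<le> x then \<phi> 1 x else inv (\<phi> 1) x) m) \<or>
         moves_towards_zero (zpow (\<lambda>x. if 0 \<le> x then \<phi> 1 x else inv (\<phi> 1) x) m)"
  by (rule zpow_symmetrized_moves[of "\<phi> 1" "\<phi> (-1)"])
    (simp_all add: flow_add flow_0 flow_fixes_zero flow_neg flow_one_up assms)

end

section \<open>Local conjugacies on the line\<close>

lemma eventually_nhds_zero_prodE:
  fixes P :: "real \<times> real \<Rightarrow> bool"
  assumes "\<forall>\<^sub>F st in nhds 0 \<times>\<^sub>F nhds 0. P st"
  obtains r where "0 < r" "\<And>s t. \<bar>s\<bar> < r \<Longrightarrow> \<bar>t\<bar> < r \<Longrightarrow> P (s, t)"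
proof -
  obtain Q where "eventually Q (nhds (0::real))" and Q: "\<And>s t. Q s \<Longrightarrow> Q t \<Longrightarrow> P (s, t)"
    using assms unfolding eventually_prod_same by blast
  then obtain r where "0 < r" "\<And>s. dist s 0 < r \<Longrightarrow> Q s"
    unfolding eventually_nhds_metric by blast
  with Q show ?thesis
    using that by auto
qed

lemma IVT_opposite_signs:
  fixes f :: "real \<Rightarrow> real"
  assumes "continuous_on {a..b} f" "a \<le> b" "f a * f b < 0" "\<bar>y\<bar> < min \<bar>f a\<bar> \<bar>f b\<bar>"
  shows "y \<in> f ` {a..b}"
proof -
  have "is_interval (f ` {a..b})"
    using assms(1) by (simp add: is_interval_connected_1 connected_continuous_image)
  moreover have "min (f a) (f b) \<le> y" "y \<le> max (f a) (f b)"
    using assms(3,4) by (auto simp: mult_less_0_iff)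
  moreover have "min (f a) (f b) \<in> f ` {a..b}" "max (f a) (f b) \<in> f ` {a..b}"
    using assms(2) by (auto simp: min_def max_def)
  ultimately show ?thesis
    unfolding is_interval_1 by blast
qed

lemma strict_mono_or_antimono_less_iff:
  fixes f :: "real \<Rightarrow> real"
  assumes "strict_mono_on I f \<or> strict_antimono_on I f" and "s \<in> I" "t \<in> I" "s \<noteq> t"
  shows "f s < f t \<longleftrightarrow> (s < t \<longleftrightarrow> strict_mono_on I f)"
proof (cases "s < t")
  case True
  then show ?thesis
    using assms monotone_onD[of I "(<)" "(<)" f s t] monotone_onD[of I "(<)" "\<lambda>x y. y < x" f s t]
    by auto
next
  case False
  then have "t < s"
    using \<open>s \<noteq> t\<close> by linarith
  then show ?thesis
    using assms monotone_onD[of I "(<)" "(<)" f t s] monotone_onD[of I "(<)" "\<lambda>x y. y < x" f t s]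
    by auto
qed

lemma strict_mono_or_antimono_opposite_signs:
  fixes f :: "real \<Rightarrow> real"
  assumes "strict_mono_on I f \<or> strict_antimono_on I f" and "-c \<in> I" "0 \<in> I" "c \<in> I" "0 < c"
    and "f 0 = 0"
  shows "f (-c) * f c < 0"
proof -
  have "-c \<noteq> 0" "0 \<noteq> c"
    using \<open>0 < c\<close> by auto
  then show ?thesis
    using strict_mono_or_antimono_less_iff[OF assms(1,2,3)] strict_mono_or_antimono_less_iff[OF assms(1,3,2)]
      strict_mono_or_antimono_less_iff[OF assms(1,3,4)] strict_mono_or_antimono_less_iff[OF assms(1,4,3)]
      assms(5,6) by (auto simp: mult_less_0_iff)
qed

lemma eventually_nhds_in_image_interval:
  fixes \<alpha> :: "real \<Rightarrow> real"
  assumes "0 < \<delta>" "continuous_on {-\<delta>..\<delta>} \<alpha>" "inj_on \<alpha> {-\<delta>..\<delta>}" "\<alpha> 0 = 0"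
  shows "\<forall>\<^sub>F y in nhds 0. y \<in> \<alpha> ` {-\<delta>..\<delta>}"
proof -
  have "strict_mono_on {-\<delta>..\<delta>} \<alpha> \<or> strict_antimono_on {-\<delta>..\<delta>} \<alpha>"
    using assms(2,3) by (simp add: injective_eq_monotone_map)
  then have "\<alpha> (-\<delta>) * \<alpha> \<delta> < 0"
    using assms(1,4) by (intro strict_mono_or_antimono_opposite_signs) auto
  then have "0 < min \<bar>\<alpha> (-\<delta>)\<bar> \<bar>\<alpha> \<delta>\<bar>"
    by auto
  moreover have "y \<in> \<alpha> ` {-\<delta>..\<delta>}" if "\<bar>y\<bar> < min \<bar>\<alpha> (-\<delta>)\<bar> \<bar>\<alpha> \<delta>\<bar>" for y
    by (rule IVT_opposite_signs[OF assms(2) _ \<open>\<alpha> (-\<delta>) * \<alpha> \<delta> < 0\<close> that]) (use assms(1) in simp)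
  ultimately show ?thesis
    unfolding eventually_nhds_metric dist_real_def by (intro exI[of _ "min \<bar>\<alpha> (-\<delta>)\<bar> \<bar>\<alpha> \<delta>\<bar>"]) simp
qed

lemma conjugacy_orientation:
  fixes \<alpha> \<beta> S :: "real \<Rightarrow> real"
  assumes "strict_mono_on I \<alpha> \<or> strict_antimono_on I \<alpha>" "strict_mono_on I \<beta> \<or> strict_antimono_on I \<beta>"
    and "s \<in> I" "t \<in> I" "\<alpha> t < \<alpha> s" "\<beta> s = S (\<beta> t)"
  shows "\<beta> t < S (\<beta> t) \<longleftrightarrow> (strict_mono_on I \<alpha> \<longleftrightarrow> strict_mono_on I \<beta>)"
proof -
  have "t \<noteq> s"
    using assms(5) by blast
  then have "t < s \<longleftrightarrow> strict_mono_on I \<alpha>"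
    using strict_mono_or_antimono_less_iff[OF assms(1,4,3)] assms(5) by blast
  moreover have "\<beta> t < \<beta> s \<longleftrightarrow> (t < s \<longleftrightarrow> strict_mono_on I \<beta>)"
    using strict_mono_or_antimono_less_iff[OF assms(2,4,3) \<open>t \<noteq> s\<close>] .
  ultimately show ?thesis
    using assms(6) by simp
qed

lemma no_conjugacy_on_interval:
  fixes \<alpha> \<beta> \<psi> S :: "real \<Rightarrow> real" and \<delta> :: real
  defines "I \<equiv> {-\<delta>..\<delta>}"
  assumes "0 < \<delta>" and cont: "continuous_on I \<alpha>" "continuous_on I \<beta>" and inj: "inj_on \<alpha> I" "inj_on \<beta> I"
    and zero: "\<alpha> 0 = 0" "\<beta> 0 = 0"
    and up: "\<And>x. x \<noteq> 0 \<Longrightarrow> x < \<psi> x"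
    and S: "moves_away_from_zero S \<or> moves_towards_zero S"
    and lim: "((\<lambda>t. \<psi> (\<alpha> t)) \<longlongrightarrow> 0) (nhds 0)"
    and conj: "\<And>s t. s \<in> I \<Longrightarrow> t \<in> I \<Longrightarrow> \<alpha> s = \<psi> (\<alpha> t) \<Longrightarrow> \<beta> s = S (\<beta> t)"
  shows False
proof -
  have I: "0 \<in> I" "\<delta> \<in> I" "-\<delta> \<in> I"
    using \<open>0 < \<delta>\<close> by (auto simp: I_def)
  have mono: "strict_mono_on I \<alpha> \<or> strict_antimono_on I \<alpha>" "strict_mono_on I \<beta> \<or> strict_antimono_on I \<beta>"
    using cont inj by (simp_all add: injective_eq_monotone_map I_def)
  have "\<forall>\<^sub>F t in nhds 0. \<psi> (\<alpha> t) \<in> \<alpha> ` I"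
    using eventually_compose_filterlim[OF eventually_nhds_in_image_interval lim] \<open>0 < \<delta>\<close> cont(1) inj(1) zero(1)
    by (simp add: I_def)
  then obtain d1 where "0 < d1" and d1: "\<And>t. \<bar>t\<bar> < d1 \<Longrightarrow> \<psi> (\<alpha> t) \<in> \<alpha> ` I"
    unfolding eventually_nhds_metric dist_real_def by auto
  define d where "d = min d1 \<delta> / 2"
  have "0 < d" "d < d1" "d \<in> I" "-d \<in> I"
    using \<open>0 < d1\<close> \<open>0 < \<delta>\<close> by (auto simp: d_def I_def min_def)
  have orientation: "\<beta> t < S (\<beta> t) \<longleftrightarrow> (strict_mono_on I \<alpha> \<longleftrightarrow> strict_mono_on I \<beta>)"
    if "t = d \<or> t = -d" for t
  proof -
    have "t \<in> I" "t \<noteq> 0" "\<bar>t\<bar> < d1"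
      using that \<open>0 < d\<close> \<open>d < d1\<close> \<open>d \<in> I\<close> \<open>-d \<in> I\<close> by auto
    obtain s where s: "\<psi> (\<alpha> t) = \<alpha> s" and "s \<in> I"
      using d1[OF \<open>\<bar>t\<bar> < d1\<close>] by (rule imageE)
    have "\<alpha> t \<noteq> 0"
      using inj(1) \<open>t \<in> I\<close> I(1) \<open>t \<noteq> 0\<close> zero(1) by (metis inj_onD)
    then have "\<alpha> t < \<alpha> s"
      using up s by metis
    moreover have "\<beta> s = S (\<beta> t)"
      using conj[OF \<open>s \<in> I\<close> \<open>t \<in> I\<close>] s by simp
    ultimately show ?thesis
      by (rule conjugacy_orientation[OF mono \<open>s \<in> I\<close> \<open>t \<in> I\<close>])
  qed
  have "\<beta> (-d) * \<beta> d < 0"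
    by (rule strict_mono_or_antimono_opposite_signs[OF mono(2) \<open>-d \<in> I\<close> I(1) \<open>d \<in> I\<close> \<open>0 < d\<close> zero(2)])
  with S have "(\<beta> (-d) < S (\<beta> (-d))) \<noteq> (\<beta> d < S (\<beta> d))"
    by (rule moves_from_or_towards_zero_opposite_signs)
  with orientation show False
    by auto
qed

lemma no_local_conjugacy_to_two_sided_map:
  fixes \<alpha> \<beta> \<psi> S :: "real \<Rightarrow> real"
  assumes cont: "\<forall>\<^sub>F t in nhds 0. isCont \<alpha> t \<and> isCont \<beta> t"
    and inj: "\<forall>\<^sub>F (s, t) in nhds 0 \<times>\<^sub>F nhds 0. (\<alpha> s = \<alpha> t \<longrightarrow> s = t) \<and> (\<beta> s = \<beta> t \<longrightarrow> s = t)"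
    and zero: "\<alpha> 0 = 0" "\<beta> 0 = 0"
    and up: "\<And>x. x \<noteq> 0 \<Longrightarrow> x < \<psi> x"
    and S: "moves_away_from_zero S \<or> moves_towards_zero S"
    and lim: "((\<lambda>t. \<psi> (\<alpha> t)) \<longlongrightarrow> 0) (nhds 0)"
    and conj: "\<forall>\<^sub>F (s, t) in nhds 0 \<times>\<^sub>F nhds 0. \<alpha> s = \<psi> (\<alpha> t) \<longrightarrow> \<beta> s = S (\<beta> t)"
  shows False
proof -
  have "\<forall>\<^sub>F (s, t) in nhds 0 \<times>\<^sub>F nhds 0. (isCont \<alpha> s \<and> isCont \<beta> s) \<and>
      ((\<alpha> s = \<alpha> t \<longrightarrow> s = t) \<and> (\<beta> s = \<beta> t \<longrightarrow> s = t)) \<and> (\<alpha> s = \<psi> (\<alpha> t) \<longrightarrow> \<beta> s = S (\<beta> t))"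
    using eventually_conj[OF eventually_prodI[OF cont eventually_True] eventually_conj[OF inj conj]]
    by (simp add: case_prod_unfold)
  then obtain r where "0 < r" and r: "\<And>s t. \<bar>s\<bar> < r \<Longrightarrow> \<bar>t\<bar> < r \<Longrightarrow> (isCont \<alpha> s \<and> isCont \<beta> s) \<and>
      ((\<alpha> s = \<alpha> t \<longrightarrow> s = t) \<and> (\<beta> s = \<beta> t \<longrightarrow> s = t)) \<and> (\<alpha> s = \<psi> (\<alpha> t) \<longrightarrow> \<beta> s = S (\<beta> t))"
    by (rule eventually_nhds_zero_prodE) blast
  define J where "J = {-(r/2)..r/2}"
  have "\<bar>s\<bar> < r" if "s \<in> J" for s
    using that \<open>0 < r\<close> by (simp add: J_def abs_less_iff)
  with r have rJ: "\<And>s t. s \<in> J \<Longrightarrow> t \<in> J \<Longrightarrow> (isCont \<alpha> s \<and> isCont \<beta> s) \<and>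
      ((\<alpha> s = \<alpha> t \<longrightarrow> s = t) \<and> (\<beta> s = \<beta> t \<longrightarrow> s = t)) \<and> (\<alpha> s = \<psi> (\<alpha> t) \<longrightarrow> \<beta> s = S (\<beta> t))"
    by blast
  show False
  proof (rule no_conjugacy_on_interval[of "r/2" \<alpha> \<beta> \<psi> S, folded J_def])
    show "continuous_on J \<alpha>" "continuous_on J \<beta>"
      by (intro continuous_at_imp_continuous_on ballI; use rJ in blast)+
    show "inj_on \<alpha> J" "inj_on \<beta> J"
      by (intro inj_onI; use rJ in blast)+
    show "\<beta> s = S (\<beta> t)" if "s \<in> J" "t \<in> J" "\<alpha> s = \<psi> (\<alpha> t)" for s t
      using rJ that by blast
    show "0 < r/2"
      using \<open>0 < r\<close> by simp
  qed (fact zero up S lim)+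
qed

section \<open>Neighbourhoods in charts\<close>

definition chart_nhds :: "'p set \<Rightarrow> ('p \<Rightarrow> 'e::topological_space) \<Rightarrow> 'p \<Rightarrow> 'p filter" where
  "chart_nhds U \<phi> p = inf (filtercomap \<phi> (nhds (\<phi> p))) (principal U)"

lemma filterlim_chart_nhds_iff:
  "filterlim f (chart_nhds U \<phi> p) F \<longleftrightarrow> ((\<lambda>x. \<phi> (f x)) \<longlongrightarrow> \<phi> p) F \<and> (\<forall>\<^sub>F x in F. f x \<in> U)"
  by (simp add: chart_nhds_def filterlim_inf filterlim_filtercomap_iff filterlim_principal o_def)

lemma eventually_in_chart_nhds: "\<forall>\<^sub>F q in chart_nhds U \<phi> p. q \<in> U"
  by (simp add: chart_nhds_def eventually_inf_principal)

lemma tendsto_chart_nhds: "(\<phi> \<longlongrightarrow> \<phi> p) (chart_nhds U \<phi> p)"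
  using filterlim_chart_nhds_iff[of "\<lambda>x. x" U \<phi> p "chart_nhds U \<phi> p"] filterlim_ident by auto

lemma prod_chart_nhds_le:
  "chart_nhds U \<phi> p \<times>\<^sub>F chart_nhds V \<theta> q \<le> chart_nhds (U \<times> V) (\<lambda>(x, y). (\<phi> x, \<theta> y)) (p, q)"
proof -
  have "((\<lambda>z. (\<phi> (fst z), \<theta> (snd z))) \<longlongrightarrow> (\<phi> p, \<theta> q)) (chart_nhds U \<phi> p \<times>\<^sub>F chart_nhds V \<theta> q)"
    using filterlim_compose[OF tendsto_chart_nhds[where U=U] filterlim_fst]
      filterlim_compose[OF tendsto_chart_nhds[where U=V] filterlim_snd]
    by (rule tendsto_Pair)
  moreover have "\<forall>\<^sub>F z in chart_nhds U \<phi> p \<times>\<^sub>F chart_nhds V \<theta> q. z \<in> U \<times> V"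
    using eventually_prodI[OF eventually_in_chart_nhds eventually_in_chart_nhds] by (simp add: mem_Times_iff)
  ultimately have "filterlim (\<lambda>z. z) (chart_nhds (U \<times> V) (\<lambda>(x, y). (\<phi> x, \<theta> y)) (p, q))
      (chart_nhds U \<phi> p \<times>\<^sub>F chart_nhds V \<theta> q)"
    by (simp add: filterlim_chart_nhds_iff case_prod_unfold)
  then show ?thesis
    by (simp add: filterlim_def)
qed

lemma prod_atlasI: "(U, \<phi>) \<in> A \<Longrightarrow> (V, \<theta>) \<in> B \<Longrightarrow> (U \<times> V, \<lambda>(x, y). (\<phi> x, \<theta> y)) \<in> prod_atlas A B"
  unfolding prod_atlas_def by blast

lemma smooth_on_imp_continuous_on: "smooth_on S f \<Longrightarrow> continuous_on S f"
  unfolding smooth_on_def by (metis iter_dd.simps(1))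

lemma smooth_map_chart_continuous:
  assumes "smooth_map M A N B f" "(U, \<phi>) \<in> A" "(V, \<theta>) \<in> B"
  shows "open (\<phi> ` (U \<inter> f -` V))" "continuous_on (\<phi> ` (U \<inter> f -` V)) (\<theta> \<circ> f \<circ> inv_into U \<phi>)"
  using assms smooth_on_imp_continuous_on unfolding smooth_map_def by fastforce+

lemma smooth_map_chart_tendsto:
  assumes smooth: "smooth_map M A N B f" and charts: "(U, \<phi>) \<in> A" "(V, \<theta>) \<in> B"
    and "inj_on \<phi> U" "p \<in> U" "f p \<in> V"
  shows "filterlim f (chart_nhds V \<theta> (f p)) (chart_nhds U \<phi> p)"
proof -
  let ?O = "\<phi> ` (U \<inter> f -` V)" and ?g = "\<theta> \<circ> f \<circ> inv_into U \<phi>"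
  have "\<phi> p \<in> ?O"
    using assms by blast
  then have "isCont ?g (\<phi> p)"
    using smooth_map_chart_continuous[OF assms(1-3)] continuous_on_eq_continuous_at by blast
  then have "((\<lambda>q. ?g (\<phi> q)) \<longlongrightarrow> ?g (\<phi> p)) (chart_nhds U \<phi> p)"
    by (rule isCont_tendsto_compose) (rule tendsto_chart_nhds)
  moreover have "?g (\<phi> q) = \<theta> (f q)" if "q \<in> U" for q
    using inv_into_f_f[OF \<open>inj_on \<phi> U\<close> that] by simp
  ultimately have "((\<lambda>q. \<theta> (f q)) \<longlongrightarrow> \<theta> (f p)) (chart_nhds U \<phi> p)"
    using \<open>p \<in> U\<close> by (auto intro: Lim_transform_eventually eventually_mono[OF eventually_in_chart_nhds])
  moreover have "\<forall>\<^sub>F q in chart_nhds U \<phi> p. \<phi> q \<in> ?O"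
    using topological_tendstoD[OF tendsto_chart_nhds[of \<phi> p U] smooth_map_chart_continuous(1)[OF assms(1-3)] \<open>\<phi> p \<in> ?O\<close>] .
  then have "\<forall>\<^sub>F q in chart_nhds U \<phi> p. f q \<in> V"
    using \<open>inj_on \<phi> U\<close> by (auto elim!: eventually_mono[OF eventually_conj[OF eventually_in_chart_nhds]] dest: inj_onD)
  ultimately show ?thesis
    unfolding filterlim_chart_nhds_iff by blast
qed

lemma chart_nhds_le_restrict:
  assumes "inj_on \<phi> U" "open (\<phi> ` (U \<inter> W))" "p \<in> U \<inter> W"
  shows "chart_nhds U \<phi> p \<le> chart_nhds (U \<inter> W) \<phi> p"
proof -
  have "\<forall>\<^sub>F q in chart_nhds U \<phi> p. \<phi> q \<in> \<phi> ` (U \<inter> W)"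
    using assms by (intro topological_tendstoD[OF tendsto_chart_nhds]) auto
  then have "\<forall>\<^sub>F q in chart_nhds U \<phi> p. q \<in> U \<inter> W"
    using \<open>inj_on \<phi> U\<close> by (auto elim!: eventually_mono[OF eventually_conj[OF eventually_in_chart_nhds]] dest: inj_onD)
  then have "filterlim (\<lambda>q. q) (chart_nhds (U \<inter> W) \<phi> p) (chart_nhds U \<phi> p)"
    by (simp add: filterlim_chart_nhds_iff tendsto_chart_nhds)
  then show ?thesis
    by (simp add: filterlim_def)
qed

lemma smooth_on_subset_chart_tendsto:
  assumes smooth: "smooth_on_subset M A S N B f" and "x \<in> S"
    and charts: "(U, \<phi>) \<in> A" "(V, \<theta>) \<in> B" and "inj_on \<phi> U" "x \<in> U" "f x \<in> V"
  shows "filterlim f (chart_nhds V \<theta> (f x)) (inf (chart_nhds U \<phi> x) (principal S))"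
proof -
  obtain W F where W: "atlas_open M A W" "x \<in> W" and F: "smooth_map W (restrict_atlas A W) N B F"
    and agree: "\<And>y. y \<in> S \<inter> W \<Longrightarrow> F y = f y"
    using smooth \<open>x \<in> S\<close> unfolding smooth_on_subset_def by blast
  have chart_W: "(U \<inter> W, \<phi>) \<in> restrict_atlas A W"
    using charts(1) unfolding restrict_atlas_def by blast
  have "open (\<phi> ` (U \<inter> W))"
    using W(1) charts(1) unfolding atlas_open_def by blast
  have "F x = f x"
    using agree \<open>x \<in> S\<close> W(2) by blast
  have "filterlim F (chart_nhds V \<theta> (f x)) (chart_nhds (U \<inter> W) \<phi> x)"
    unfolding \<open>F x = f x\<close>[symmetric]
    by (rule smooth_map_chart_tendsto[OF F chart_W charts(2)])
      (use \<open>inj_on \<phi> U\<close> \<open>x \<in> U\<close> W(2) \<open>F x = f x\<close> \<open>f x \<in> V\<close> in \<open>auto intro: inj_on_subset\<close>)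
  then have "filterlim F (chart_nhds V \<theta> (f x)) (inf (chart_nhds U \<phi> x) (principal S))"
    by (rule filterlim_mono)
      (use chart_nhds_le_restrict[OF \<open>inj_on \<phi> U\<close> \<open>open (\<phi> ` (U \<inter> W))\<close>] assms W(2) in \<open>auto intro: le_infI1\<close>)
  moreover have "\<forall>\<^sub>F y in inf (chart_nhds U \<phi> x) (principal S). F y = f y"
  proof -
    have "\<forall>\<^sub>F y in chart_nhds (U \<inter> W) \<phi> x. y \<in> W"
      using eventually_in_chart_nhds by (rule eventually_mono) simp
    then have "\<forall>\<^sub>F y in chart_nhds U \<phi> x. y \<in> W"
      using chart_nhds_le_restrict[OF \<open>inj_on \<phi> U\<close> \<open>open (\<phi> ` (U \<inter> W))\<close>] assms W(2)
      by (auto simp: le_filter_def)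
    then show ?thesis
      unfolding eventually_inf_principal by (auto elim!: eventually_mono intro: agree)
  qed
  ultimately show ?thesis
    by (simp add: filterlim_cong)
qed

lemma chart_curve:
  fixes \<phi> :: "'p \<Rightarrow> 'e::euclidean_space"
  assumes "inj_on \<phi> U" "open (\<phi> ` U)" "p \<in> U"
  obtains \<gamma> :: "real \<Rightarrow> 'p" where "\<gamma> 0 = p" "filterlim \<gamma> (chart_nhds U \<phi> p) (nhds 0)"
    "\<forall>\<^sub>F (s, t) in nhds 0 \<times>\<^sub>F nhds 0. \<gamma> s = \<gamma> t \<longrightarrow> s = t"
    "\<forall>f. continuous_on (\<phi> ` U) (f \<circ> inv_into U \<phi>) \<longrightarrow> (\<forall>\<^sub>F t in nhds 0. isCont (f \<circ> \<gamma>) t)"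
proof -
  obtain v :: 'e where "v \<in> Basis"
    using nonempty_Basis by blast
  then have "v \<noteq> 0"
    by (auto simp: nonzero_Basis)
  define c where "c t = \<phi> p + t *\<^sub>R v" for t :: real
  define \<gamma> where "\<gamma> = inv_into U \<phi> \<circ> c"
  have c_cont: "isCont c t" for t
    unfolding c_def by (intro continuous_intros)
  have c_lim: "(c \<longlongrightarrow> \<phi> p) (nhds 0)"
    unfolding c_def using filterlim_ident[of "nhds (0::real)"] by (auto intro!: tendsto_eq_intros)
  have "\<forall>\<^sub>F t in nhds 0. c t \<in> \<phi> ` U"
    using assms by (intro topological_tendstoD[OF c_lim]) auto
  then have near: "\<forall>\<^sub>F t in nhds 0. c t \<in> \<phi> ` U \<and> \<gamma> t \<in> U \<and> \<phi> (\<gamma> t) = c t"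
    by (elim eventually_mono) (auto simp: \<gamma>_def inv_into_into f_inv_into_f)
  show ?thesis
  proof
    show "\<gamma> 0 = p"
      using assms by (simp add: \<gamma>_def c_def)
    have "((\<lambda>t. \<phi> (\<gamma> t)) \<longlongrightarrow> \<phi> p) (nhds 0)"
      by (rule Lim_transform_eventually[OF c_lim]) (use near in \<open>auto elim: eventually_mono\<close>)
    then show "filterlim \<gamma> (chart_nhds U \<phi> p) (nhds 0)"
      unfolding filterlim_chart_nhds_iff using near by (auto elim: eventually_mono)
    have c_inj: "s = t" if "c s = c t" for s t
      using that \<open>v \<noteq> 0\<close> by (simp add: c_def)
    show "\<forall>\<^sub>F (s, t) in nhds 0 \<times>\<^sub>F nhds 0. \<gamma> s = \<gamma> t \<longrightarrow> s = t"
      using eventually_prodI[OF near near] by (rule eventually_mono) (auto simp: case_prod_beta intro!: c_inj)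
    have "\<forall>\<^sub>F t in nhds 0. isCont (f \<circ> \<gamma>) t" if "continuous_on (\<phi> ` U) (f \<circ> inv_into U \<phi>)" for f
      using near
    proof (rule eventually_mono)
      fix t assume "c t \<in> \<phi> ` U \<and> \<gamma> t \<in> U \<and> \<phi> (\<gamma> t) = c t"
      then have "isCont (f \<circ> inv_into U \<phi>) (c t)"
        using that assms(2) continuous_on_eq_continuous_at by blast
      then show "isCont (f \<circ> \<gamma>) t"
        unfolding \<gamma>_def o_assoc by (rule continuous_at_compose[OF c_cont])
    qed
    then show "\<forall>f. continuous_on (\<phi> ` U) (f \<circ> inv_into U \<phi>) \<longrightarrow> (\<forall>\<^sub>F t in nhds 0. isCont (f \<circ> \<gamma>) t)"
      by blast
  qed
qed

lemma eventually_prod_filterlim: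
  assumes "\<forall>\<^sub>F z in F1 \<times>\<^sub>F F2. P z" and "filterlim f F1 G1" "filterlim g F2 G2"
  shows "\<forall>\<^sub>F (x, y) in G1 \<times>\<^sub>F G2. P (f x, g y)"
proof -
  have "filterlim (\<lambda>z. (f (fst z), g (snd z))) (F1 \<times>\<^sub>F F2) (G1 \<times>\<^sub>F G2)"
    using assms(2,3) by (intro filterlim_Pair filterlim_compose[OF _ filterlim_fst] filterlim_compose[OF _ filterlim_snd])
  from eventually_compose_filterlim[OF assms(1) this] show ?thesis
    unfolding case_prod_unfold .
qed

section \<open>Bibundles between \<int>-actions on \<real>\<close>

lemma Z_action_groupoid_simps [simp]:
  "arr (Z_action_groupoid f) = UNIV" "obj (Z_action_groupoid f) = UNIV"
  "arr_atlas (Z_action_groupoid f) = {({n} \<times> UNIV, snd) | n. True}"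
  "obj_atlas (Z_action_groupoid f) = {(UNIV, id)}"
  "src (Z_action_groupoid f) = snd" "tgt (Z_action_groupoid f) = (\<lambda>(k, x). zpow f k x)"
  "ident (Z_action_groupoid f) = (\<lambda>x. (0, x))"
  by (simp_all add: Z_action_groupoid_def)

lemma zpow_0 [simp]: "zpow f 0 = id" and zpow_1 [simp]: "zpow f 1 = f"
  by (simp_all add: zpow_def)

locale Z_biprincipal_bibundle =
  fixes \<psi> \<psi>h :: "real \<Rightarrow> real"
    and P :: "'p set" and AP :: "('p set \<times> ('p \<Rightarrow> 'e::euclidean_space)) set"
    and a a' :: "'p \<Rightarrow> real" and la :: "int \<times> real \<Rightarrow> 'p \<Rightarrow> 'p" and ra :: "'p \<Rightarrow> int \<times> real \<Rightarrow> 'p"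
  assumes biprincipal: "biprincipal_bibundle (Z_action_groupoid \<psi>) (Z_action_groupoid \<psi>h) P AP a a' la ra"
begin

abbreviation "G \<equiv> Z_action_groupoid \<psi>"
abbreviation "H \<equiv> Z_action_groupoid \<psi>h"

lemma bibundle: "bibundle G H P AP a a' la ra"
  using biprincipal unfolding biprincipal_bibundle_def by blast

lemma manifold: "manifold P AP"
  using bibundle unfolding bibundle_def by blast

lemma chart:
  assumes "(U, \<phi>) \<in> AP"
  shows "U \<subseteq> P" "inj_on \<phi> U" "open (\<phi> ` U)"
  using manifold assms unfolding manifold_def by auto

lemma chart_exists:
  assumes "p \<in> P"
  obtains U \<phi> where "(U, \<phi>) \<in> AP" "p \<in> U"
  using manifold assms unfolding manifold_def by fastforce

lemma anchors_smooth:
  "smooth_map P AP UNIV {(UNIV, id)} a" "smooth_map P AP UNIV {(UNIV, id)} a'"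
  using bibundle unfolding bibundle_def by simp_all

lemma anchor_chart_continuous:
  assumes "(U, \<phi>) \<in> AP"
  shows "continuous_on (\<phi> ` U) (a \<circ> inv_into U \<phi>)" "continuous_on (\<phi> ` U) (a' \<circ> inv_into U \<phi>)"
  using smooth_map_chart_continuous(2)[OF anchors_smooth(1) assms, of UNIV id]
    smooth_map_chart_continuous(2)[OF anchors_smooth(2) assms, of UNIV id] by simp_all

lemma anchor_tendsto:
  assumes "(U, \<phi>) \<in> AP" "p \<in> U"
  shows "(a \<longlongrightarrow> a p) (chart_nhds U \<phi> p)" "(a' \<longlongrightarrow> a' p) (chart_nhds U \<phi> p)"
  using smooth_map_chart_tendsto[OF anchors_smooth(1) assms(1), of UNIV id p]
    smooth_map_chart_tendsto[OF anchors_smooth(2) assms(1), of UNIV id p] chart[OF assms(1)] assms(2)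
  by (simp_all add: filterlim_chart_nhds_iff)

lemma a_surj: "a ` P = UNIV"
  using bibundle unfolding bibundle_def by simp

lemma left_action:
  assumes "p \<in> P"
  shows "la (k, a p) p \<in> P" "a (la (k, a p) p) = zpow \<psi> k (a p)" "a' (la (k, a p) p) = a' p"
    and "la (0, a p) p = p"
  using bibundle assms unfolding bibundle_def left_dom_def by auto

lemma right_action:
  assumes "p \<in> P" "a' p = zpow \<psi>h k y"
  shows "ra p (k, y) \<in> P" "a' (ra p (k, y)) = y" "a (ra p (k, y)) = a p"
  using bibundle assms unfolding bibundle_def right_dom_def by auto

lemma right_action_zero: "p \<in> P \<Longrightarrow> ra p (0, a' p) = p"
  using bibundle unfolding bibundle_def by auto

text \<open>For q, q' in one a-fibre, right_division q q' is the unique arrow h with q \<cdot> h = q';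
  for q, q' in one a'-fibre, left_division q q' is the unique arrow g with g \<cdot> q' = q.\<close>

definition right_division :: "'p \<Rightarrow> 'p \<Rightarrow> int \<times> real" where
  "right_division q q' = snd (inv_into (right_dom H P a') (\<lambda>(p, h). (p, ra p h)) (q, q'))"

definition left_division :: "'p \<Rightarrow> 'p \<Rightarrow> int \<times> real" where
  "left_division q q' = fst (inv_into (left_dom G P a) (\<lambda>(g, p). (la g p, p)) (q, q'))"

lemma right_diffeo:
  "diffeo_subsets (P \<times> UNIV) (prod_atlas AP (arr_atlas H)) (right_dom H P a')
     (P \<times> P) (prod_atlas AP AP) (fibre_sq P a) (\<lambda>(p, h). (p, ra p h))"
  using bibundle unfolding bibundle_def by simp

lemma left_diffeo:
  "diffeo_subsets (UNIV \<times> P) (prod_atlas (arr_atlas G) AP) (left_dom G P a)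
     (P \<times> P) (prod_atlas AP AP) (fibre_sq P a') (\<lambda>(g, p). (la g p, p))"
  using biprincipal unfolding biprincipal_bibundle_def by simp

lemma right_division:
  assumes "(q, q') \<in> fibre_sq P a"
  shows "inv_into (right_dom H P a') (\<lambda>(p, h). (p, ra p h)) (q, q') = (q, right_division q q')"
    and "ra q (right_division q q') = q'"
    and "a' q = zpow \<psi>h (fst (right_division q q')) (snd (right_division q q'))"
proof -
  let ?\<Psi> = "\<lambda>(p, h). (p, ra p h)"
  define z where "z = inv_into (right_dom H P a') ?\<Psi> (q, q')"
  have bij: "bij_betw ?\<Psi> (right_dom H P a') (fibre_sq P a)"
    using right_diffeo unfolding diffeo_subsets_def by blast
  have "z \<in> right_dom H P a'"
    unfolding z_def using bij_betw_imp_surj_on[OF bij] assms by (intro inv_into_into) simp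
  moreover have "?\<Psi> z = (q, q')"
    unfolding z_def by (rule bij_betw_inv_into_right[OF bij assms])
  ultimately have z: "fst z = q" "ra q (snd z) = q'" "a' q = zpow \<psi>h (fst (snd z)) (snd (snd z))"
    by (auto simp: right_dom_def case_prod_beta)
  have division: "right_division q q' = snd z"
    by (simp add: right_division_def z_def)
  show "z = (q, right_division q q')"
    using z(1) division by (simp add: prod_eq_iff)
  show "ra q (right_division q q') = q'" and "a' q = zpow \<psi>h (fst (right_division q q')) (snd (right_division q q'))"
    using z(2,3) division by simp_all
qed

lemma right_division_ra:
  assumes "q \<in> P" "a' q = zpow \<psi>h k y"
  shows "right_division q (ra q (k, y)) = (k, y)"
proof -
  let ?\<Psi> = "\<lambda>(p, h). (p, ra p h)"
  have "inj_on ?\<Psi> (right_dom H P a')"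
    using right_diffeo unfolding diffeo_subsets_def bij_betw_def by blast
  moreover have "(q, (k, y)) \<in> right_dom H P a'"
    using assms by (simp add: right_dom_def)
  ultimately have "inv_into (right_dom H P a') ?\<Psi> (?\<Psi> (q, (k, y))) = (q, (k, y))"
    by (rule inv_into_f_f)
  then show ?thesis
    by (simp add: right_division_def)
qed

lemma snd_right_division: "(q, q') \<in> fibre_sq P a \<Longrightarrow> snd (right_division q q') = a' q'"
  using right_division[of q q'] right_action(2)[of q "fst (right_division q q')" "snd (right_division q q')"]
  by (simp add: fibre_sq_def)

lemma left_division:
  assumes "(q, q') \<in> fibre_sq P a'"
  shows "inv_into (left_dom G P a) (\<lambda>(g, p). (la g p, p)) (q, q') = (left_division q q', q')"
    and "la (left_division q q') q' = q"
    and "snd (left_division q q') = a q'"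
proof -
  let ?\<Phi> = "\<lambda>(g, p). (la g p, p)"
  define z where "z = inv_into (left_dom G P a) ?\<Phi> (q, q')"
  have bij: "bij_betw ?\<Phi> (left_dom G P a) (fibre_sq P a')"
    using left_diffeo unfolding diffeo_subsets_def by blast
  have "z \<in> left_dom G P a"
    unfolding z_def using bij_betw_imp_surj_on[OF bij] assms by (intro inv_into_into) simp
  moreover have "?\<Phi> z = (q, q')"
    unfolding z_def by (rule bij_betw_inv_into_right[OF bij assms])
  ultimately have z: "snd z = q'" "la (fst z) q' = q" "snd (fst z) = a q'"
    by (auto simp: left_dom_def case_prod_beta)
  have division: "left_division q q' = fst z"
    by (simp add: left_division_def z_def)
  show "z = (left_division q q', q')"
    using z(1) division by (simp add: prod_eq_iff)
  show "la (left_division q q') q' = q" and "snd (left_division q q') = a q'"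
    using z(2,3) division by simp_all
qed

lemma left_division_la:
  assumes "q \<in> P"
  shows "left_division (la (k, a q) q) q = (k, a q)"
proof -
  let ?\<Phi> = "\<lambda>(g, p). (la g p, p)"
  have "inj_on ?\<Phi> (left_dom G P a)"
    using left_diffeo unfolding diffeo_subsets_def bij_betw_def by blast
  moreover have "((k, a q), q) \<in> left_dom G P a"
    using assms by (simp add: left_dom_def)
  ultimately have "inv_into (left_dom G P a) ?\<Phi> (?\<Phi> ((k, a q), q)) = ((k, a q), q)"
    by (rule inv_into_f_f)
  then show ?thesis
    by (simp add: left_division_def)
qed

text \<open>The arrows of H over a chart of the arrow space all have the same integer part, and
  the inverse of the principal-bundle map is continuous.\<close>

lemma right_division_locally_constant:
  assumes charts: "(U, \<phi>) \<in> AP" "(U', \<phi>') \<in> AP" and "q0 \<in> U" "q0' \<in> U'"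
    and fibre: "(q0, q0') \<in> fibre_sq P a"
  shows "\<forall>\<^sub>F (q, q') in chart_nhds U \<phi> q0 \<times>\<^sub>F chart_nhds U' \<phi>' q0'.
           (q, q') \<in> fibre_sq P a \<longrightarrow> fst (right_division q q') = fst (right_division q0 q0')"
proof -
  let ?\<Psi>' = "inv_into (right_dom H P a') (\<lambda>(p, h). (p, ra p h))"
  define k where "k = fst (right_division q0 q0')"
  define V where "V = U \<times> ({k} \<times> (UNIV :: real set))"
  have smooth: "smooth_on_subset (P \<times> P) (prod_atlas AP AP) (fibre_sq P a) (P \<times> UNIV) (prod_atlas AP (arr_atlas H)) ?\<Psi>'"
    using right_diffeo unfolding diffeo_subsets_def by blast
  have source: "(U \<times> U', \<lambda>(x, y). (\<phi> x, \<phi>' y)) \<in> prod_atlas AP AP"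
    using charts by (rule prod_atlasI)
  have target: "(V, \<lambda>(x, y). (\<phi> x, snd y)) \<in> prod_atlas AP (arr_atlas H)"
    unfolding V_def using charts(1) by (rule prod_atlasI) auto
  have "inj_on (\<lambda>(x, y). (\<phi> x, \<phi>' y)) (U \<times> U')"
    using chart(2)[OF charts(1)] chart(2)[OF charts(2)] by (auto simp: inj_on_def)
  moreover have "?\<Psi>' (q0, q0') \<in> V"
    using right_division(1)[OF fibre] \<open>q0 \<in> U\<close> by (simp add: V_def k_def mem_Times_iff)
  ultimately have "filterlim ?\<Psi>' (chart_nhds V (\<lambda>(x, y). (\<phi> x, snd y)) (?\<Psi>' (q0, q0')))
      (inf (chart_nhds (U \<times> U') (\<lambda>(x, y). (\<phi> x, \<phi>' y)) (q0, q0')) (principal (fibre_sq P a)))"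
    using assms by (intro smooth_on_subset_chart_tendsto[OF smooth fibre source target]) auto
  then have "\<forall>\<^sub>F z in chart_nhds (U \<times> U') (\<lambda>(x, y). (\<phi> x, \<phi>' y)) (q0, q0').
      z \<in> fibre_sq P a \<longrightarrow> ?\<Psi>' z \<in> V"
    unfolding filterlim_chart_nhds_iff eventually_inf_principal by blast
  then have "\<forall>\<^sub>F z in chart_nhds U \<phi> q0 \<times>\<^sub>F chart_nhds U' \<phi>' q0'. z \<in> fibre_sq P a \<longrightarrow> ?\<Psi>' z \<in> V"
    by (rule filter_leD[OF prod_chart_nhds_le])
  then show ?thesis
    by (rule eventually_mono) (auto simp: right_division(1) V_def k_def)
qed

lemma left_division_locally_constant:
  assumes charts: "(U, \<phi>) \<in> AP" "(U', \<phi>') \<in> AP" and "q0 \<in> U" "q0' \<in> U'"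
    and fibre: "(q0, q0') \<in> fibre_sq P a'"
  shows "\<forall>\<^sub>F (q, q') in chart_nhds U \<phi> q0 \<times>\<^sub>F chart_nhds U' \<phi>' q0'.
           (q, q') \<in> fibre_sq P a' \<longrightarrow> fst (left_division q q') = fst (left_division q0 q0')"
proof -
  let ?\<Phi>' = "inv_into (left_dom G P a) (\<lambda>(g, p). (la g p, p))"
  define k where "k = fst (left_division q0 q0')"
  define V where "V = ({k} \<times> (UNIV :: real set)) \<times> U'"
  have smooth: "smooth_on_subset (P \<times> P) (prod_atlas AP AP) (fibre_sq P a') (UNIV \<times> P) (prod_atlas (arr_atlas G) AP) ?\<Phi>'"
    using left_diffeo unfolding diffeo_subsets_def by blast
  have source: "(U \<times> U', \<lambda>(x, y). (\<phi> x, \<phi>' y)) \<in> prod_atlas AP AP"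
    using charts by (rule prod_atlasI)
  have target: "(V, \<lambda>(x, y). (snd x, \<phi>' y)) \<in> prod_atlas (arr_atlas G) AP"
    unfolding V_def using charts(2) by (intro prod_atlasI) auto
  have "inj_on (\<lambda>(x, y). (\<phi> x, \<phi>' y)) (U \<times> U')"
    using chart(2)[OF charts(1)] chart(2)[OF charts(2)] by (auto simp: inj_on_def)
  moreover have "?\<Phi>' (q0, q0') \<in> V"
    using left_division(1)[OF fibre] \<open>q0' \<in> U'\<close> by (simp add: V_def k_def mem_Times_iff)
  ultimately have "filterlim ?\<Phi>' (chart_nhds V (\<lambda>(x, y). (snd x, \<phi>' y)) (?\<Phi>' (q0, q0')))
      (inf (chart_nhds (U \<times> U') (\<lambda>(x, y). (\<phi> x, \<phi>' y)) (q0, q0')) (principal (fibre_sq P a')))"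
    using assms by (intro smooth_on_subset_chart_tendsto[OF smooth fibre source target]) auto
  then have "\<forall>\<^sub>F z in chart_nhds (U \<times> U') (\<lambda>(x, y). (\<phi> x, \<phi>' y)) (q0, q0').
      z \<in> fibre_sq P a' \<longrightarrow> ?\<Phi>' z \<in> V"
    unfolding filterlim_chart_nhds_iff eventually_inf_principal by blast
  then have "\<forall>\<^sub>F z in chart_nhds U \<phi> q0 \<times>\<^sub>F chart_nhds U' \<phi>' q0'. z \<in> fibre_sq P a' \<longrightarrow> ?\<Phi>' z \<in> V"
    by (rule filter_leD[OF prod_chart_nhds_le])
  then show ?thesis
    by (rule eventually_mono) (auto simp: left_division(1) V_def k_def)
qed

lemma eventually_in_P: "(U, \<phi>) \<in> AP \<Longrightarrow> \<forall>\<^sub>F q in chart_nhds U \<phi> p. q \<in> P"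
  by (rule eventually_mono[OF eventually_in_chart_nhds]) (use chart(1) in blast)

lemma eventually_in_P_prod:
  "(U, \<phi>) \<in> AP \<Longrightarrow> (U', \<phi>') \<in> AP \<Longrightarrow> \<forall>\<^sub>F (q, q') in chart_nhds U \<phi> p \<times>\<^sub>F chart_nhds U' \<phi>' p'. q \<in> P \<and> q' \<in> P"
  using eventually_prodI[OF eventually_in_P eventually_in_P] by (simp add: case_prod_unfold)

lemma a_locally_injective:
  assumes "(U, \<phi>) \<in> AP" "p \<in> U"
  shows "\<forall>\<^sub>F (q, q') in chart_nhds U \<phi> p \<times>\<^sub>F chart_nhds U \<phi> p. a q = a q' \<longrightarrow> q = q'"
proof -
  have "p \<in> P"
    using chart(1)[OF assms(1)] assms(2) by blast
  then have "right_division p p = (0, a' p)"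
    using right_division_ra[of p 0 "a' p"] right_action_zero by simp
  then have "\<forall>\<^sub>F (q, q') in chart_nhds U \<phi> p \<times>\<^sub>F chart_nhds U \<phi> p.
      (q, q') \<in> fibre_sq P a \<longrightarrow> fst (right_division q q') = 0"
    using right_division_locally_constant[OF assms(1) assms(1) assms(2) assms(2)] \<open>p \<in> P\<close>
    by (simp add: fibre_sq_def)
  moreover have "\<forall>\<^sub>F (q, q') in chart_nhds U \<phi> p \<times>\<^sub>F chart_nhds U \<phi> p. q \<in> P \<and> q' \<in> P"
    by (rule eventually_in_P_prod[OF assms(1) assms(1)])
  ultimately show ?thesis
  proof eventually_elim
    case (elim z)
    obtain q q' where z: "z = (q, q')"
      by fastforce
    show ?case
    proof (unfold z, clarify)
      assume "a q = a q'"
      with elim z have fibre: "(q, q') \<in> fibre_sq P a" and "fst (right_division q q') = 0"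
        by (auto simp: fibre_sq_def)
      then have "right_division q q' = (0, a' q)"
        using right_division(3)[OF fibre] by (simp add: prod_eq_iff)
      then show "q = q'"
        using right_division(2)[OF fibre] right_action_zero elim z by auto
    qed
  qed
qed

lemma a'_locally_injective:
  assumes "(U, \<phi>) \<in> AP" "p \<in> U"
  shows "\<forall>\<^sub>F (q, q') in chart_nhds U \<phi> p \<times>\<^sub>F chart_nhds U \<phi> p. a' q = a' q' \<longrightarrow> q = q'"
proof -
  have "p \<in> P"
    using chart(1)[OF assms(1)] assms(2) by blast
  then have "left_division p p = (0, a p)"
    using left_division_la[of p 0] left_action(4) by simp
  then have "\<forall>\<^sub>F (q, q') in chart_nhds U \<phi> p \<times>\<^sub>F chart_nhds U \<phi> p.
      (q, q') \<in> fibre_sq P a' \<longrightarrow> fst (left_division q q') = 0"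
    using left_division_locally_constant[OF assms(1) assms(1) assms(2) assms(2)] \<open>p \<in> P\<close>
    by (simp add: fibre_sq_def)
  moreover have "\<forall>\<^sub>F (q, q') in chart_nhds U \<phi> p \<times>\<^sub>F chart_nhds U \<phi> p. q \<in> P \<and> q' \<in> P"
    by (rule eventually_in_P_prod[OF assms(1) assms(1)])
  ultimately show ?thesis
  proof eventually_elim
    case (elim z)
    obtain q q' where z: "z = (q, q')"
      by fastforce
    show ?case
    proof (unfold z, clarify)
      assume "a' q = a' q'"
      with elim z have fibre: "(q, q') \<in> fibre_sq P a'" and "fst (left_division q q') = 0"
        by (auto simp: fibre_sq_def)
      then have "left_division q q' = (0, a q')"
        using left_division(3)[OF fibre] by (simp add: prod_eq_iff)
      then show "q = q'"
        using left_division(2)[OF fibre] left_action(4) elim z by auto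
    qed
  qed
qed

lemma a'_locally_conjugate:
  assumes "(U, \<phi>) \<in> AP" "(U', \<phi>') \<in> AP" "q0 \<in> U" "q0' \<in> U'" "(q0, q0') \<in> fibre_sq P a"
  shows "\<forall>\<^sub>F (q, q') in chart_nhds U \<phi> q0 \<times>\<^sub>F chart_nhds U' \<phi>' q0'.
           a q = a q' \<longrightarrow> a' q = zpow \<psi>h (fst (right_division q0 q0')) (a' q')"
proof -
  have "\<forall>\<^sub>F (q, q') in chart_nhds U \<phi> q0 \<times>\<^sub>F chart_nhds U' \<phi>' q0'. q \<in> P \<and> q' \<in> P"
    using assms(1,2) by (rule eventually_in_P_prod)
  with right_division_locally_constant[OF assms] show ?thesis
  proof eventually_elim
    case (elim z)
    obtain q q' where z: "z = (q, q')"
      by fastforce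
    show ?case
    proof (unfold z, clarify)
      assume "a q = a q'"
      with elim z have fibre: "(q, q') \<in> fibre_sq P a"
        by (auto simp: fibre_sq_def)
      then show "a' q = zpow \<psi>h (fst (right_division q0 q0')) (a' q')"
        using right_division(3)[OF fibre] snd_right_division[OF fibre] elim z by auto
    qed
  qed
qed

definition shift :: "'p \<Rightarrow> 'p" where
  "shift q = la (1, a q) q"

lemma shift:
  assumes "q \<in> P"
  shows "shift q \<in> P" "a (shift q) = \<psi> (a q)" "a' (shift q) = a' q"
  using left_action(1-3)[OF assms, of 1] by (simp_all add: shift_def)

lemma shift_tendsto:
  assumes "(U, \<phi>) \<in> AP" "p \<in> U" "(U', \<phi>') \<in> AP" "shift p \<in> U'"
  shows "filterlim shift (chart_nhds U' \<phi>' (shift p)) (chart_nhds U \<phi> p)"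
proof -
  let ?V = "({1} \<times> (UNIV :: real set)) \<times> U" and ?\<chi> = "\<lambda>(g :: int \<times> real, q). (snd g, \<phi> q)"
  have smooth: "smooth_on_subset (UNIV \<times> P) (prod_atlas (arr_atlas G) AP) (left_dom G P a) P AP (\<lambda>(g, q). la g q)"
    using bibundle unfolding bibundle_def by simp
  have "p \<in> P"
    using chart(1)[OF assms(1)] assms(2) by blast
  have source: "(?V, ?\<chi>) \<in> prod_atlas (arr_atlas G) AP"
    using assms(1) by (intro prod_atlasI) auto
  have "inj_on ?\<chi> ?V"
    using chart(2)[OF assms(1)] by (auto simp: inj_on_def)
  then have lim: "filterlim (\<lambda>(g, q). la g q) (chart_nhds U' \<phi>' (shift p))
      (inf (chart_nhds ?V ?\<chi> ((1, a p), p)) (principal (left_dom G P a)))"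
    using smooth_on_subset_chart_tendsto[OF smooth _ source assms(3), of "((1, a p), p)"] assms \<open>p \<in> P\<close>
    by (simp add: left_dom_def shift_def)
  have "((\<lambda>q. (a q, \<phi> q)) \<longlongrightarrow> (a p, \<phi> p)) (chart_nhds U \<phi> p)"
    by (intro tendsto_Pair anchor_tendsto(1)[OF assms(1,2)] tendsto_chart_nhds)
  moreover have "\<forall>\<^sub>F q in chart_nhds U \<phi> p. ((1, a q), q) \<in> ?V \<and> ((1, a q), q) \<in> left_dom G P a"
    by (rule eventually_mono[OF eventually_in_chart_nhds]) (use chart(1)[OF assms(1)] in \<open>auto simp: left_dom_def\<close>)
  ultimately have "filterlim (\<lambda>q. ((1, a q), q)) (inf (chart_nhds ?V ?\<chi> ((1, a p), p)) (principal (left_dom G P a)))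
      (chart_nhds U \<phi> p)"
    by (auto simp: filterlim_inf filterlim_principal filterlim_chart_nhds_iff elim: eventually_mono)
  from filterlim_compose[OF lim this] show ?thesis
    by (simp add: shift_def[abs_def])
qed

lemma right_division_shift:
  assumes "p \<in> P" "\<psi> (a p) = a p"
  shows "(p, shift p) \<in> fibre_sq P a" "fst (right_division p (shift p)) \<noteq> 0"
    and "zpow \<psi>h (fst (right_division p (shift p))) (a' p) = a' p"
proof -
  show fibre: "(p, shift p) \<in> fibre_sq P a"
    using shift[OF assms(1)] assms by (simp add: fibre_sq_def)
  show "zpow \<psi>h (fst (right_division p (shift p))) (a' p) = a' p"
    using right_division(3)[OF fibre] snd_right_division[OF fibre] shift(3)[OF assms(1)] by simp
  show "fst (right_division p (shift p)) \<noteq> 0"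
  proof
    assume "fst (right_division p (shift p)) = 0"
    then have "right_division p (shift p) = (0, a' p)"
      using snd_right_division[OF fibre] shift(3)[OF assms(1)] by (simp add: prod_eq_iff)
    then have "shift p = p"
      using right_division(2)[OF fibre] right_action_zero[OF assms(1)] by simp
    then have "left_division (la (1, a p) p) p = left_division (la (0, a p) p) p"
      using left_action(4)[OF assms(1)] by (simp add: shift_def)
    then show False
      using left_division_la[OF assms(1)] by simp
  qed
qed

lemma anchors_along_curve:
  assumes "(U, \<phi>) \<in> AP" "p \<in> U"
    and \<gamma>_lim: "filterlim \<gamma> (chart_nhds U \<phi> p) (nhds 0)"
    and \<gamma>_inj: "\<forall>\<^sub>F (s, t) in nhds 0 \<times>\<^sub>F nhds 0. \<gamma> s = \<gamma> t \<longrightarrow> s = t"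
    and \<gamma>_cont: "\<forall>f :: 'p \<Rightarrow> real. continuous_on (\<phi> ` U) (f \<circ> inv_into U \<phi>) \<longrightarrow> (\<forall>\<^sub>F t in nhds 0. isCont (f \<circ> \<gamma>) t)"
  shows "\<forall>\<^sub>F t in nhds 0. isCont (a \<circ> \<gamma>) t \<and> isCont (a' \<circ> \<gamma>) t"
    and "\<forall>\<^sub>F (s, t) in nhds 0 \<times>\<^sub>F nhds 0. ((a \<circ> \<gamma>) s = (a \<circ> \<gamma>) t \<longrightarrow> s = t) \<and> ((a' \<circ> \<gamma>) s = (a' \<circ> \<gamma>) t \<longrightarrow> s = t)"
proof -
  show "\<forall>\<^sub>F t in nhds 0. isCont (a \<circ> \<gamma>) t \<and> isCont (a' \<circ> \<gamma>) t"
    using \<gamma>_cont[rule_format, OF anchor_chart_continuous(1)[OF assms(1)]]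
      \<gamma>_cont[rule_format, OF anchor_chart_continuous(2)[OF assms(1)]]
    by (rule eventually_conj)
  show "\<forall>\<^sub>F (s, t) in nhds 0 \<times>\<^sub>F nhds 0. ((a \<circ> \<gamma>) s = (a \<circ> \<gamma>) t \<longrightarrow> s = t) \<and> ((a' \<circ> \<gamma>) s = (a' \<circ> \<gamma>) t \<longrightarrow> s = t)"
    using eventually_conj[OF \<gamma>_inj eventually_conj[OF
        eventually_prod_filterlim[OF a_locally_injective[OF assms(1,2)] \<gamma>_lim \<gamma>_lim]
        eventually_prod_filterlim[OF a'_locally_injective[OF assms(1,2)] \<gamma>_lim \<gamma>_lim]]]
    by (rule eventually_mono) (auto simp: case_prod_beta)
qed

lemma shift_along_curve:
  assumes charts: "(U, \<phi>) \<in> AP" "p \<in> U" "(U', \<phi>') \<in> AP" "shift p \<in> U'"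
    and fixed: "\<psi> (a p) = a p" and \<gamma>_lim: "filterlim \<gamma> (chart_nhds U \<phi> p) (nhds 0)"
  shows "((\<lambda>t. \<psi> (a (\<gamma> t))) \<longlongrightarrow> \<psi> (a p)) (nhds 0)"
    and "\<forall>\<^sub>F (s, t) in nhds 0 \<times>\<^sub>F nhds 0. a (\<gamma> s) = \<psi> (a (\<gamma> t)) \<longrightarrow>
           a' (\<gamma> s) = zpow \<psi>h (fst (right_division p (shift p))) (a' (\<gamma> t))"
proof -
  have "p \<in> P"
    using chart(1)[OF charts(1)] charts(2) by blast
  have \<gamma>_P: "\<forall>\<^sub>F t in nhds 0. \<gamma> t \<in> P"
    using eventually_compose_filterlim[OF eventually_in_P[OF charts(1)] \<gamma>_lim] .
  have shift_\<gamma>_lim: "filterlim (\<lambda>t. shift (\<gamma> t)) (chart_nhds U' \<phi>' (shift p)) (nhds 0)"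
    using filterlim_compose[OF shift_tendsto[OF charts] \<gamma>_lim] .
  have "((\<lambda>t. a (shift (\<gamma> t))) \<longlongrightarrow> \<psi> (a p)) (nhds 0)"
    using filterlim_compose[OF anchor_tendsto(1)[OF charts(3,4)] shift_\<gamma>_lim] shift(2)[OF \<open>p \<in> P\<close>] by simp
  then show "((\<lambda>t. \<psi> (a (\<gamma> t))) \<longlongrightarrow> \<psi> (a p)) (nhds 0)"
    by (rule Lim_transform_eventually) (rule eventually_mono[OF \<gamma>_P], simp add: shift(2))
  have "\<forall>\<^sub>F (s, t) in nhds 0 \<times>\<^sub>F nhds 0. a (\<gamma> s) = a (shift (\<gamma> t)) \<longrightarrow>
      a' (\<gamma> s) = zpow \<psi>h (fst (right_division p (shift p))) (a' (shift (\<gamma> t)))"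
    using eventually_prod_filterlim[OF a'_locally_conjugate[OF charts(1,3,2,4)
        right_division_shift(1)[OF \<open>p \<in> P\<close> fixed]] \<gamma>_lim shift_\<gamma>_lim]
    by simp
  then show "\<forall>\<^sub>F (s, t) in nhds 0 \<times>\<^sub>F nhds 0. a (\<gamma> s) = \<psi> (a (\<gamma> t)) \<longrightarrow>
      a' (\<gamma> s) = zpow \<psi>h (fst (right_division p (shift p))) (a' (\<gamma> t))"
    using eventually_prodI[OF eventually_True \<gamma>_P]
    by (rule eventually_mono[OF eventually_conj]) (auto simp: case_prod_beta shift)
qed

lemma incompatible_generator_dynamics:
  assumes \<psi>_zero: "\<psi> 0 = 0" and \<psi>_up: "\<And>x. x \<noteq> 0 \<Longrightarrow> x < \<psi> x"
    and \<psi>h_moves: "\<And>m. m \<noteq> 0 \<Longrightarrow> moves_away_from_zero (zpow \<psi>h m) \<or> moves_towards_zero (zpow \<psi>h m)"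
  shows False
proof -
  obtain p where "p \<in> P" "a p = 0"
    using a_surj by (metis UNIV_I imageE)
  then have fixed: "\<psi> (a p) = a p"
    using \<psi>_zero by simp
  obtain U \<phi> where chart_p: "(U, \<phi>) \<in> AP" "p \<in> U"
    using chart_exists[OF \<open>p \<in> P\<close>] .
  obtain U' \<phi>' where chart_shift: "(U', \<phi>') \<in> AP" "shift p \<in> U'"
    using chart_exists[OF shift(1)[OF \<open>p \<in> P\<close>]] .
  define m where "m = fst (right_division p (shift p))"
  have S: "moves_away_from_zero (zpow \<psi>h m) \<or> moves_towards_zero (zpow \<psi>h m)"
    using \<psi>h_moves right_division_shift(2)[OF \<open>p \<in> P\<close> fixed] by (simp add: m_def)
  have "a' p = 0"
    using moves_from_or_towards_zero_fixed_point[OF S] right_division_shift(3)[OF \<open>p \<in> P\<close> fixed]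
    by (simp add: m_def)
  obtain \<gamma> :: "real \<Rightarrow> 'p" where "\<gamma> 0 = p" and \<gamma>: "filterlim \<gamma> (chart_nhds U \<phi> p) (nhds 0)"
    "\<forall>\<^sub>F (s, t) in nhds 0 \<times>\<^sub>F nhds 0. \<gamma> s = \<gamma> t \<longrightarrow> s = t"
    "\<forall>f :: 'p \<Rightarrow> real. continuous_on (\<phi> ` U) (f \<circ> inv_into U \<phi>) \<longrightarrow> (\<forall>\<^sub>F t in nhds 0. isCont (f \<circ> \<gamma>) t)"
    by (rule chart_curve[OF chart(2,3)[OF chart_p(1)] chart_p(2)])
  note along = shift_along_curve[OF chart_p chart_shift fixed \<gamma>(1), folded m_def]
  show False
  proof (rule no_local_conjugacy_to_two_sided_map[of "a \<circ> \<gamma>" "a' \<circ> \<gamma>" \<psi> "zpow \<psi>h m"])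
    show "\<forall>\<^sub>F t in nhds 0. isCont (a \<circ> \<gamma>) t \<and> isCont (a' \<circ> \<gamma>) t"
      and "\<forall>\<^sub>F (s, t) in nhds 0 \<times>\<^sub>F nhds 0. ((a \<circ> \<gamma>) s = (a \<circ> \<gamma>) t \<longrightarrow> s = t) \<and> ((a' \<circ> \<gamma>) s = (a' \<circ> \<gamma>) t \<longrightarrow> s = t)"
      by (rule anchors_along_curve[OF chart_p \<gamma>])+
    show "((\<lambda>t. \<psi> ((a \<circ> \<gamma>) t)) \<longlongrightarrow> 0) (nhds 0)"
      using along(1) \<open>a p = 0\<close> \<psi>_zero by simp
    show "\<forall>\<^sub>F (s, t) in nhds 0 \<times>\<^sub>F nhds 0. (a \<circ> \<gamma>) s = \<psi> ((a \<circ> \<gamma>) t) \<longrightarrow> (a' \<circ> \<gamma>) s = zpow \<psi>h m ((a' \<circ> \<gamma>) t)"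
      using along(2) by simp
  qed (simp_all add: \<open>\<gamma> 0 = p\<close> \<open>a p = 0\<close> \<open>a' p = 0\<close> \<psi>_up S)
qed

end

theorem not_biprincipal_bibundle_Z_actions:
  assumes "\<psi> 0 = 0" "\<And>x. x \<noteq> 0 \<Longrightarrow> x < \<psi> x"
    and "\<And>m. m \<noteq> 0 \<Longrightarrow> moves_away_from_zero (zpow \<psi>h m) \<or> moves_towards_zero (zpow \<psi>h m)"
  shows "\<not> biprincipal_bibundle (Z_action_groupoid \<psi>) (Z_action_groupoid \<psi>h) P AP a a' la ra"
  using Z_biprincipal_bibundle.incompatible_generator_dynamics[OF Z_biprincipal_bibundle.intro assms]
  by blast

theorem proposition7:
  fixes h :: "real \<Rightarrow> real"
    and \<phi> :: "real \<Rightarrow> real \<Rightarrow> real"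
    and \<psi> \<psi>h :: "real \<Rightarrow> real"
    and P :: "'p set" and AP :: "('p set \<times> ('p \<Rightarrow> 'e::euclidean_space)) set"
    and a a' :: "'p \<Rightarrow> real"
    and la :: "int \<times> real \<Rightarrow> 'p \<Rightarrow> 'p" and ra :: "'p \<Rightarrow> int \<times> real \<Rightarrow> 'p"
  assumes h_smooth: "\<forall>n x. ((deriv ^^ n) h) differentiable (at x)"
    and h_flat: "\<forall>n. ((deriv ^^ n) h) 0 = 0"
    and h_pos: "\<forall>x. x \<noteq> 0 \<longrightarrow> h x > 0"
    and flow_init: "\<forall>x. \<phi> 0 x = x"
    and flow_ode: "\<forall>t x. ((\<lambda>s. \<phi> s x) has_real_derivative h (\<phi> t x)) (at t)"
    and psi_def: "\<psi> = \<phi> 1"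
    and psih_def: "\<psi>h = (\<lambda>x. if x \<ge> 0 then \<psi> x else inv \<psi> x)"
  shows "\<not> (biprincipal_bibundle (Z_action_groupoid \<psi>) (Z_action_groupoid \<psi>h) P AP a a' la ra
             \<and> lifts_identity (Z_action_groupoid \<psi>) (Z_action_groupoid \<psi>h) P a a')
       \<and> \<not> biprincipal_bibundle (Z_action_groupoid \<psi>) (Z_action_groupoid \<psi>h) P AP a a' la ra"
proof -
  have h_deriv: "(h has_real_derivative deriv h x) (at x)" for x
    using h_smooth[rule_format, of 0] by (simp add: DERIV_deriv_iff_real_differentiable)
  have "continuous_on UNIV (deriv h)"
    using h_smooth[rule_format, of 1]
    by (auto intro!: continuous_at_imp_continuous_on differentiable_imp_continuous_within)
  then interpret flow: positive_field_flow h \<phi>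
    using h_deriv h_flat[rule_format, of 0] h_pos flow_init flow_ode
    by unfold_locales (auto intro: lipschitz_on_cball_if_continuous_deriv)
  have "\<not> biprincipal_bibundle (Z_action_groupoid (\<phi> 1))
      (Z_action_groupoid (\<lambda>x. if 0 \<le> x then \<phi> 1 x else inv (\<phi> 1) x)) P AP a a' la ra"
    by (rule not_biprincipal_bibundle_Z_actions)
      (simp_all add: flow.flow_fixes_zero flow.flow_one_up flow.zpow_symmetrized_flow_moves)
  then show ?thesis
    unfolding psih_def psi_def by blast
qed

end
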